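(* Let $Q$ be a connected natural join query over binary relations $R_1,\dots,R_\ell$, and let $J$ be a database instance together with a designation, for each relation $R_i$, of one of its two attributes as its light attribute. Run the join-ordering procedure described in the context on $(Q,J)$, resolving every nondeterministic choice arbitrarily. Then the procedure terminates. At termination the collection $\mathcal{C}$ contains exactly one component $(c,T_c)$, and $T_c=Q(J)$, i.e. $T_c$ is the natural join of all relations $R_1^J,\dots,R_\ell^J$.
   Context: A natural join query over binary relations consists of relation symbols $R_1,\dots,R_\ell$, each having exactly two distinct attributes. The answer $Q(J)$ on an instance $J$ is the natural join of all $R_i^J$. Relations are sets of tuples, so there are no duplicates. The query graph has one vertex per attribute and one edge $\{A,B\}$ per relation $R(A,B)$. $Q$ is connected if its query graph is connected. Join-ordering procedure. It maintains a collection $\mathcal{C}$ of components $(c,T_c)$, where $c$ is a set of attributes and $T_c$ is a relation over attribute set $c$. Initially $\mathcal{C}=\emptyset$ and every relation is marked unused. Outer loop: while there exist an attribute $X$ that lies in no component's attribute set and an unused relation $R$ whose light attribute is $X$, do the following four steps. (i) Let $Y$ be the other attribute of $R$. Set $c:=\{X,Y\}$ and $T_c:=R^J$, and mark $R$ used. (ii) While there is an unused relation $R'$ whose light attribute lies in $c$: set $T_c:=T_c\bowtie R'^J$, set $c:=c\cup\operatorname{attr}(R')$, and mark $R'$ used. Such a join is called a light join. (iii) While there is a component $(c',T_{c'})\in\mathcal{C}$ with $c\cap c'\neq\emptyset$: set $T_c:=T_c\bowtie T_{c'}$, set $c:=c\cup c'$, and remove $(c',T_{c'})$ from $\mathcal{C}$.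 (iv) Add $(c,T_c)$ to $\mathcal{C}$. When the outer loop ends, the procedure outputs $T_c$ for the component in $\mathcal{C}$. *)

theory Defs
  imports Main
begin

text \<open>A tuple over an attribute set c is a
map t :: 'a \<rightharpoonup> 'v with dom t = c; a relation is a set of such tuples.
The query has relation symbols R_0, ..., R_(l-1) (indices i < l); relation R_i has the
two distinct attributes A i and B i; J i is its instance relation; light i is its light
attribute.\<close>

type_synonym ('a, 'v) tuple = "'a \<rightharpoonup> 'v"
type_synonym ('a, 'v) rel = "('a, 'v) tuple set"

definition attrs :: "('i \<Rightarrow> 'a) \<Rightarrow> ('i \<Rightarrow> 'a) \<Rightarrow> 'i \<Rightarrow> 'a set" where
  "attrs A B i = {A i, B i}"

definition njoin :: "'a set \<Rightarrow> ('a, 'v) rel \<Rightarrow> 'a set \<Rightarrow> ('a, 'v) rel \<Rightarrow> ('a, 'v) rel" where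
  "njoin c1 T1 c2 T2 = {t. dom t = c1 \<union> c2 \<and> t |` c1 \<in> T1 \<and> t |` c2 \<in> T2}"

definition query_answer :: "nat \<Rightarrow> (nat \<Rightarrow> 'a) \<Rightarrow> (nat \<Rightarrow> 'a) \<Rightarrow> (nat \<Rightarrow> ('a, 'v) rel) \<Rightarrow> ('a, 'v) rel" where
  "query_answer l A B J =
     {t. dom t = (\<Union>i<l. attrs A B i) \<and> (\<forall>i<l. t |` attrs A B i \<in> J i)}"

definition query_connected :: "nat \<Rightarrow> (nat \<Rightarrow> 'a) \<Rightarrow> (nat \<Rightarrow> 'a) \<Rightarrow> bool" where
  "query_connected l A B \<longleftrightarrow>
     (\<forall>x\<in>(\<Union>i<l. attrs A B i). \<forall>y\<in>(\<Union>i<l. attrs A B i).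
        (x, y) \<in> ({(A i, B i) | i. i < l} \<union> {(B i, A i) | i. i < l})\<^sup>*)"

text \<open>States of the join-ordering procedure.  comps is the collection C (as a list,
so multiplicities are visible); used the set of used relation indices; cur the component
currently being built in steps (i)-(iv), with the phase: LightPh = inside loop (ii),
MergePh = inside loop (iii).  cur = None means: at the head of the outer loop.\<close>

datatype phase = LightPh | MergePh

record ('a, 'v) jstate =
  comps :: "('a set \<times> ('a, 'v) rel) list"
  used :: "nat set"
  cur :: "(phase \<times> 'a set \<times> ('a, 'v) rel) option"

definition init_state :: "('a, 'v) jstate" where
  "init_state = \<lparr>comps = [], used = {}, cur = None\<rparr>"

definition comp_attrs :: "('a, 'v) jstate \<Rightarrow> 'a set" where
  "comp_attrs s = (\<Union>p\<in>set (comps s). fst p)"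

definition remove_nth :: "nat \<Rightarrow> 'b list \<Rightarrow> 'b list" where
  "remove_nth k xs = take k xs @ drop (Suc k) xs"

inductive jstep :: "nat \<Rightarrow> (nat \<Rightarrow> 'a) \<Rightarrow> (nat \<Rightarrow> 'a) \<Rightarrow> (nat \<Rightarrow> 'a) \<Rightarrow> (nat \<Rightarrow> ('a, 'v) rel)
                    \<Rightarrow> ('a, 'v) jstate \<Rightarrow> ('a, 'v) jstate \<Rightarrow> bool"
  for l A B light J where
  \<comment> \<open>outer loop guard + step (i)\<close>
  start: "\<lbrakk> cur s = None; i < l; i \<notin> used s; light i \<notin> comp_attrs s \<rbrakk> \<Longrightarrow>
     jstep l A B light J s
       (s\<lparr>used := insert i (used s), cur := Some (LightPh, attrs A B i, J i)\<rparr>)"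
  \<comment> \<open>step (ii): a light join\<close>
| light_join: "\<lbrakk> cur s = Some (LightPh, c, T); i < l; i \<notin> used s; light i \<in> c \<rbrakk> \<Longrightarrow>
     jstep l A B light J s
       (s\<lparr>used := insert i (used s),
          cur := Some (LightPh, c \<union> attrs A B i, njoin c T (attrs A B i) (J i))\<rparr>)"
  \<comment> \<open>loop (ii) ends\<close>
| end_light: "\<lbrakk> cur s = Some (LightPh, c, T);
                 \<not> (\<exists>i<l. i \<notin> used s \<and> light i \<in> c) \<rbrakk> \<Longrightarrow>
     jstep l A B light J s (s\<lparr>cur := Some (MergePh, c, T)\<rparr>)"
  \<comment> \<open>step (iii): merge with an intersecting component\<close>
| merge: "\<lbrakk> cur s = Some (MergePh, c, T); k < length (comps s); comps s ! k = (c', T');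
             c \<inter> c' \<noteq> {} \<rbrakk> \<Longrightarrow>
     jstep l A B light J s
       (s\<lparr>comps := remove_nth k (comps s), cur := Some (MergePh, c \<union> c', njoin c T c' T')\<rparr>)"
  \<comment> \<open>loop (iii) ends; step (iv)\<close>
| finish: "\<lbrakk> cur s = Some (MergePh, c, T);
              \<not> (\<exists>p\<in>set (comps s). c \<inter> fst p \<noteq> {}) \<rbrakk> \<Longrightarrow>
     jstep l A B light J s (s\<lparr>comps := comps s @ [(c, T)], cur := None\<rparr>)"

end

theory Submission
  imports Defs
begin

text \<open>Every component built by the procedure is the natural join of the relations of some
nonempty index set S over the attributes covered by S, because the natural join of two such
joins is the join over the union of the index sets.  Termination holds since every round of
the outer loop uses a new relation and the inner loops use a relation or shrink C.  At
termination every relation has been used: the light attribute of an unused relation never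
lies in a component of C, since loop (ii) would have absorbed the relation before the
component was closed.  Hence every relation is joined into some component of C; these have
pairwise disjoint attribute sets, so connectivity of the query graph leaves only one of them,
and it is the join of all relations.\<close>

abbreviation reachable ::
  "nat \<Rightarrow> (nat \<Rightarrow> 'a) \<Rightarrow> (nat \<Rightarrow> 'a) \<Rightarrow> (nat \<Rightarrow> 'a) \<Rightarrow> (nat \<Rightarrow> ('a, 'v) rel) \<Rightarrow> ('a, 'v) jstate \<Rightarrow> bool"
  where "reachable l A B light J s \<equiv> (jstep l A B light J)\<^sup>*\<^sup>* init_state s"

abbreviation terminal ::
  "nat \<Rightarrow> (nat \<Rightarrow> 'a) \<Rightarrow> (nat \<Rightarrow> 'a) \<Rightarrow> (nat \<Rightarrow> 'a) \<Rightarrow> (nat \<Rightarrow> ('a, 'v) rel) \<Rightarrow> ('a, 'v) jstate \<Rightarrow> bool"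
  where "terminal l A B light J s \<equiv> \<nexists>s'. jstep l A B light J s s'"

subsection \<open>Joins over sets of relations\<close>

definition join_over ::
  "(nat \<Rightarrow> 'a) \<Rightarrow> (nat \<Rightarrow> 'a) \<Rightarrow> (nat \<Rightarrow> ('a, 'v) rel) \<Rightarrow> nat set \<Rightarrow> ('a, 'v) rel" where
  "join_over A B J S = {t. dom t = (\<Union>i\<in>S. attrs A B i) \<and> (\<forall>i\<in>S. t |` attrs A B i \<in> J i)}"

lemma query_answer_eq_join_over: "query_answer l A B J = join_over A B J {..<l}"
  by (auto simp: query_answer_def join_over_def)

lemma restrict_map_dom: "m |` dom m = m"
  by (rule ext) (auto simp: restrict_map_def domIff)

lemma njoin_join_over:
  "njoin (\<Union>(attrs A B ` S1)) (join_over A B J S1) (\<Union>(attrs A B ` S2)) (join_over A B J S2)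
     = join_over A B J (S1 \<union> S2)"
proof -
  have "attrs A B i \<inter> \<Union>(attrs A B ` S) = attrs A B i" if "i \<in> S" for i S
    using that by blast
  then show ?thesis
    by (auto simp: njoin_def join_over_def Int_commute)
qed

lemma join_over_singleton:
  assumes "\<forall>t\<in>J i. dom t = attrs A B i"
  shows "join_over A B J {i} = J i"
proof -
  have "t \<in> join_over A B J {i} \<longleftrightarrow> t \<in> J i" for t
  proof
    assume "t \<in> join_over A B J {i}"
    then show "t \<in> J i"
      by (simp add: join_over_def) (metis restrict_map_dom)
  next
    assume "t \<in> J i"
    with assms show "t \<in> join_over A B J {i}"
      by (simp add: join_over_def) (metis restrict_map_dom)
  qed
  then show ?thesis by blast
qed

definition subjoin ::
  "nat \<Rightarrow> (nat \<Rightarrow> 'a) \<Rightarrow> (nat \<Rightarrow> 'a) \<Rightarrow> (nat \<Rightarrow> ('a, 'v) rel) \<Rightarrow> 'a set \<times> ('a, 'v) rel \<Rightarrow> bool" where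
  "subjoin l A B J p \<longleftrightarrow>
     (\<exists>S. S \<subseteq> {..<l} \<and> S \<noteq> {} \<and> p = (\<Union>(attrs A B ` S), join_over A B J S))"

lemma subjoin_singleton:
  assumes "i < l" "\<forall>t\<in>J i. dom t = attrs A B i"
  shows "subjoin l A B J (attrs A B i, J i)"
  unfolding subjoin_def using assms join_over_singleton[of J i A B]
  by (intro exI[of _ "{i}"]) auto

lemma subjoin_njoin:
  assumes "subjoin l A B J (c1, T1)" "subjoin l A B J (c2, T2)"
  shows "subjoin l A B J (c1 \<union> c2, njoin c1 T1 c2 T2)"
proof -
  obtain S1 S2 where "S1 \<subseteq> {..<l}" "S1 \<noteq> {}" "(c1, T1) = (\<Union>(attrs A B ` S1), join_over A B J S1)"
    and "S2 \<subseteq> {..<l}" "(c2, T2) = (\<Union>(attrs A B ` S2), join_over A B J S2)"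
    using assms unfolding subjoin_def by blast
  then show ?thesis
    unfolding subjoin_def using njoin_join_over[of A B S1 J S2]
    by (intro exI[of _ "S1 \<union> S2"]) auto
qed

lemma subjoin_nonempty: "subjoin l A B J (c, T) \<Longrightarrow> c \<noteq> {}"
  by (auto simp: subjoin_def attrs_def)

lemma subjoin_subset_attrs: "subjoin l A B J (c, T) \<Longrightarrow> c \<subseteq> (\<Union>i<l. attrs A B i)"
  by (auto simp: subjoin_def)

definition absorbs ::
  "(nat \<Rightarrow> 'a) \<Rightarrow> (nat \<Rightarrow> 'a) \<Rightarrow> (nat \<Rightarrow> ('a, 'v) rel) \<Rightarrow> nat \<Rightarrow> 'a set \<times> ('a, 'v) rel \<Rightarrow> bool" where
  "absorbs A B J i p \<longleftrightarrow> attrs A B i \<subseteq> fst p \<and> (\<forall>t\<in>snd p. t |` attrs A B i \<in> J i)"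

lemma absorbs_singleton:
  "\<forall>t\<in>J i. dom t = attrs A B i \<Longrightarrow> absorbs A B J i (attrs A B i, J i)"
  by (auto simp: absorbs_def) (metis restrict_map_dom)

lemma absorbs_njoinI:
  assumes "absorbs A B J i (c1, T1) \<or> absorbs A B J i (c2, T2)"
  shows "absorbs A B J i (c1 \<union> c2, njoin c1 T1 c2 T2)"
  using assms by (auto simp: absorbs_def njoin_def Int_absorb1)

lemma subjoin_absorbing_all_eq_query_answer:
  assumes "subjoin l A B J (c, T)" "\<forall>i<l. absorbs A B J i (c, T)"
  shows "T = query_answer l A B J"
proof -
  obtain S where S: "S \<subseteq> {..<l}" "c = \<Union>(attrs A B ` S)" "T = join_over A B J S"
    using assms(1) unfolding subjoin_def by blast
  with assms(2) have "c = (\<Union>i<l. attrs A B i)"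
    unfolding absorbs_def by auto
  with S assms(2) show ?thesis
    unfolding query_answer_eq_join_over join_over_def absorbs_def by auto
qed

subsection \<open>Invariants of the procedure\<close>

definition components :: "('a, 'v) jstate \<Rightarrow> ('a set \<times> ('a, 'v) rel) set" where
  "components s = set (comps s) \<union> snd ` set_option (cur s)"

lemma set_remove_nth: "k < length xs \<Longrightarrow> set xs = insert (xs ! k) (set (remove_nth k xs))"
  unfolding remove_nth_def by (metis id_take_nth_drop insert_commute list.simps(15) set_append Un_insert_right)

lemma distinct_remove_nth: "distinct xs \<Longrightarrow> distinct (remove_nth k xs)"
  by (simp add: remove_nth_def set_take_disj_set_drop_if_distinct)

lemma reachable_subjoin:
  assumes "reachable l A B light J s" "\<forall>i<l. \<forall>t\<in>J i. dom t = attrs A B i"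
  shows "\<forall>p\<in>components s. subjoin l A B J p"
  using assms(1)
proof (induction rule: rtranclp_induct)
  case base
  show ?case by (simp add: components_def init_state_def)
next
  case (step s s')
  from step.hyps(2) step.IH show ?case
  proof (cases rule: jstep.cases)
    case (merge c T k c' T')
    then have "(c', T') \<in> set (comps s)" by (metis nth_mem)
    with merge step.IH show ?thesis
      using set_remove_nth[OF merge(3)] subjoin_njoin[of l A B J c T c' T']
      by (auto simp: components_def)
  qed (auto simp: components_def assms(2) subjoin_singleton subjoin_njoin)
qed

lemma reachable_used_absorbed:
  assumes "reachable l A B light J s" "\<forall>i<l. \<forall>t\<in>J i. dom t = attrs A B i"
  shows "\<forall>i\<in>used s. \<exists>p\<in>components s. absorbs A B J i p"
  using assms(1)
proof (induction rule: rtranclp_induct)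
  case base
  show ?case by (simp add: init_state_def)
next
  case (step s s')
  from step.hyps(2) step.IH show ?case
  proof (cases rule: jstep.cases)
    case (start i)
    with step.IH show ?thesis
      using absorbs_singleton[of J i A B] assms(2) by (auto simp: components_def)
  next
    case (light_join c T i)
    have "absorbs A B J i (c \<union> attrs A B i, njoin c T (attrs A B i) (J i))"
      using light_join assms(2) by (intro absorbs_njoinI) (simp add: absorbs_singleton)
    with light_join step.IH show ?thesis
      by (auto simp: components_def intro: absorbs_njoinI)
  next
    case (merge c T k c' T')
    then have "set (comps s) = insert (c', T') (set (remove_nth k (comps s)))"
      by (metis set_remove_nth)
    with merge step.IH show ?thesis
      by (fastforce simp: components_def intro: absorbs_njoinI)
  qed (auto simp: components_def)
qed

text \<open>Loop (ii) exhausts the light joins before a component is merged and closed, so the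
light attribute of an unused relation never lies in a closed component.\<close>

definition unused_lights_outside :: "nat \<Rightarrow> (nat \<Rightarrow> 'a) \<Rightarrow> ('a, 'v) jstate \<Rightarrow> bool" where
  "unused_lights_outside l light s \<longleftrightarrow>
     (\<forall>i<l. i \<notin> used s \<longrightarrow>
        light i \<notin> comp_attrs s \<and> (\<forall>c T. cur s = Some (MergePh, c, T) \<longrightarrow> light i \<notin> c))"

lemma reachable_unused_lights_outside:
  "reachable l A B light J s \<Longrightarrow> unused_lights_outside l light s"
proof (induction rule: rtranclp_induct)
  case base
  show ?case by (simp add: unused_lights_outside_def init_state_def comp_attrs_def)
next
  case (step s s')
  from step.hyps(2) step.IH show ?case
  proof (cases rule: jstep.cases)
    case (merge c T k c' T')
    then have "set (comps s) = insert (c', T') (set (remove_nth k (comps s)))"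
      by (metis set_remove_nth)
    with merge step.IH show ?thesis
      by (auto simp: unused_lights_outside_def comp_attrs_def)
  qed (auto simp: unused_lights_outside_def comp_attrs_def)
qed

definition comps_disjoint :: "('a, 'v) jstate \<Rightarrow> bool" where
  "comps_disjoint s \<longleftrightarrow>
     distinct (comps s) \<and> pairwise (\<lambda>p q. disjnt (fst p) (fst q)) (set (comps s))"

lemma reachable_comps_disjoint:
  assumes "reachable l A B light J s" "\<forall>i<l. \<forall>t\<in>J i. dom t = attrs A B i"
  shows "comps_disjoint s"
  using assms(1)
proof (induction rule: rtranclp_induct)
  case base
  show ?case by (simp add: comps_disjoint_def init_state_def)
next
  case (step s s')
  from step.hyps(2) step.IH show ?case
  proof (cases rule: jstep.cases)
    case (merge c T k c' T')
    then have "set (remove_nth k (comps s)) \<subseteq> set (comps s)"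
      by (metis set_remove_nth subset_insertI)
    with merge step.IH show ?thesis
      by (auto simp: comps_disjoint_def distinct_remove_nth intro: pairwise_subset)
  next
    case (finish c T)
    have "c \<noteq> {}"
      using reachable_subjoin[OF step.hyps(1) assms(2)] finish(2)
      by (auto simp: components_def dest: subjoin_nonempty)
    with finish step.IH show ?thesis
      by (auto simp: comps_disjoint_def pairwise_insert disjnt_def Int_commute)
  qed (auto simp: comps_disjoint_def)
qed

subsection \<open>Termination\<close>

definition progress :: "nat \<Rightarrow> ('a, 'v) jstate \<Rightarrow> nat \<times> nat" where
  "progress l s = (card ({..<l} - used s),
     case cur s of
       None \<Rightarrow> 0
     | Some (LightPh, _) \<Rightarrow> length (comps s) + 2
     | Some (MergePh, _) \<Rightarrow> length (comps s) + 1)"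

lemma jstep_progress:
  "jstep l A B light J s s' \<Longrightarrow> (progress l s', progress l s) \<in> less_than <*lex*> less_than"
  by (induction rule: jstep.induct)
    (auto simp: progress_def remove_nth_def card_gt_0_iff intro!: diff_less)

lemma no_infinite_jstep_run: "\<nexists>f. \<forall>n. jstep l A B light J (f n) (f (Suc n))"
proof
  assume "\<exists>f. \<forall>n. jstep l A B light J (f n) (f (Suc n))"
  then obtain f where "\<forall>n. jstep l A B light J (f n) (f (Suc n))"
    by blast
  then have "\<forall>n. (f (Suc n), f n) \<in> inv_image (less_than <*lex*> less_than) (progress l)"
    by (simp only: in_inv_image) (blast intro: jstep_progress)
  moreover have "wf (inv_image (less_than <*lex*> less_than) (progress l))"
    by (intro wf_inv_image wf_lex_prod wf_less_than)
  ultimately show False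
    using wf_iff_no_infinite_down_chain by blast
qed

subsection \<open>Connectivity\<close>

lemma query_path_within_block:
  assumes "(x, y) \<in> ({(A i, B i) | i. i < l} \<union> {(B i, A i) | i. i < l})\<^sup>*"
    and "x \<in> C" "C \<in> \<C>"
    and cover: "\<forall>i<l. \<exists>D\<in>\<C>. attrs A B i \<subseteq> D"
    and disjoint: "pairwise disjnt \<C>"
  shows "y \<in> C"
  using assms(1)
proof (induction rule: rtrancl_induct)
  case base
  show ?case by fact
next
  case (step y z)
  then obtain i where "i < l" "{y, z} = attrs A B i"
    by (auto simp: attrs_def)
  with cover obtain D where "D \<in> \<C>" "y \<in> D" "z \<in> D"
    by blast
  with step.IH \<open>C \<in> \<C>\<close> disjoint have "D = C"
    by (auto simp: pairwise_def disjnt_def)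
  with \<open>z \<in> D\<close> show ?case by simp
qed

lemma connected_query_single_block:
  assumes "query_connected l A B"
    and cover: "\<forall>i<l. \<exists>D\<in>\<C>. attrs A B i \<subseteq> D"
    and disjoint: "pairwise disjnt \<C>"
    and blocks: "\<forall>D\<in>\<C>. D \<noteq> {} \<and> D \<subseteq> (\<Union>i<l. attrs A B i)"
    and "C \<in> \<C>" "D \<in> \<C>"
  shows "C = D"
proof -
  obtain x y where "x \<in> C" "y \<in> D"
    using blocks \<open>C \<in> \<C>\<close> \<open>D \<in> \<C>\<close> by (meson ex_in_conv)
  then have "x \<in> (\<Union>i<l. attrs A B i)" "y \<in> (\<Union>i<l. attrs A B i)"
    using blocks \<open>C \<in> \<C>\<close> \<open>D \<in> \<C>\<close> by (meson subsetD)+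
  with assms(1) have "(x, y) \<in> ({(A i, B i) | i. i < l} \<union> {(B i, A i) | i. i < l})\<^sup>*"
    unfolding query_connected_def by blast
  then have "y \<in> C"
    using \<open>x \<in> C\<close> \<open>C \<in> \<C>\<close> cover disjoint by (rule query_path_within_block)
  with \<open>y \<in> D\<close> \<open>C \<in> \<C>\<close> \<open>D \<in> \<C>\<close> disjoint show "C = D"
    by (auto simp: pairwise_def disjnt_def)
qed

lemma connected_query_singleton_list:
  assumes "query_connected l A B" "xs \<noteq> []" "distinct xs"
    and disjoint: "pairwise (\<lambda>p q. disjnt (fst p) (fst q)) (set xs)"
    and cover: "\<forall>i<l. \<exists>p\<in>set xs. attrs A B i \<subseteq> fst p"
    and blocks: "\<forall>p\<in>set xs. fst p \<noteq> {} \<and> fst p \<subseteq> (\<Union>i<l. attrs A B i)"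
  shows "\<exists>p. xs = [p]"
proof -
  have "pairwise disjnt (fst ` set xs)"
    using disjoint by (auto simp: pairwise_def)
  with assms(1) cover blocks have same_attrs: "fst p = fst q" if "p \<in> set xs" "q \<in> set xs" for p q
    using that by (intro connected_query_single_block[of l A B "fst ` set xs"]) auto
  have same: "p = q" if "p \<in> set xs" "q \<in> set xs" for p q
  proof (rule ccontr)
    assume "p \<noteq> q"
    with disjoint that have "disjnt (fst p) (fst q)"
      by (auto simp: pairwise_def)
    with same_attrs[OF that] blocks that show False
      by (simp add: disjnt_def)
  qed
  obtain p where "p \<in> set xs"
    using assms(2) by (cases xs) auto
  with same have "set xs = {p}"
    by blast
  with assms(3) show ?thesis
    by (metis distinct_length_2_or_more empty_set insert_not_empty list.set_intros(1,2) neq_Nil_conv singletonD)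
qed

lemma terminal_cur_None:
  assumes "terminal l A B light J s"
  shows "cur s = None"
proof (rule ccontr)
  assume "cur s \<noteq> None"
  then obtain ph c T where cur: "cur s = Some (ph, c, T)" by auto
  show False
  proof (cases ph)
    case LightPh
    with cur assms show False
      using jstep.light_join[of s c T _ l] jstep.end_light[of s c T l] by metis
  next
    case MergePh
    show False
    proof (cases "\<exists>p\<in>set (comps s). c \<inter> fst p \<noteq> {}")
      case True
      then obtain k c' T' where "k < length (comps s)" "comps s ! k = (c', T')" "c \<inter> c' \<noteq> {}"
        by (metis in_set_conv_nth prod.collapse)
      with cur MergePh assms show False
        using jstep.merge[of s c T k c' T'] by blast
    next
      case False
      with cur MergePh assms show False
        using jstep.finish[of s c T] by blast
    qed
  qed
qed

lemma terminal_all_used: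
  assumes "reachable l A B light J s" "terminal l A B light J s" "i < l"
  shows "i \<in> used s"
proof (rule ccontr)
  assume "i \<notin> used s"
  moreover have "cur s = None"
    using assms(2) by (rule terminal_cur_None)
  ultimately have "light i \<in> comp_attrs s"
    using assms(2,3) jstep.start[of s i l] by blast
  with \<open>i \<notin> used s\<close> assms(3) show False
    using reachable_unused_lights_outside[OF assms(1)] by (simp add: unused_lights_outside_def)
qed

lemma terminal_single_component:
  assumes reach: "reachable l A B light J s" and stuck: "terminal l A B light J s"
    and inst: "\<forall>i<l. \<forall>t\<in>J i. dom t = attrs A B i"
    and "query_connected l A B" "l \<ge> 1"
  shows "\<exists>p. comps s = [p] \<and> subjoin l A B J p \<and> (\<forall>i<l. absorbs A B J i p)"
proof -
  have comps: "components s = set (comps s)"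
    using terminal_cur_None[OF stuck] by (simp add: components_def)
  have absorbed: "\<forall>i<l. \<exists>p\<in>set (comps s). absorbs A B J i p"
    using reachable_used_absorbed[OF reach inst] terminal_all_used[OF reach stuck] comps by auto
  have subjoins: "\<forall>p\<in>set (comps s). subjoin l A B J p"
    using reachable_subjoin[OF reach inst] comps by simp
  obtain p where "comps s = [p]"
  proof (rule exE[OF connected_query_singleton_list[OF \<open>query_connected l A B\<close>]])
    show "comps s \<noteq> []"
      using absorbed \<open>l \<ge> 1\<close> by fastforce
    show "distinct (comps s)" "pairwise (\<lambda>p q. disjnt (fst p) (fst q)) (set (comps s))"
      using reachable_comps_disjoint[OF reach inst] by (simp_all add: comps_disjoint_def)
    show "\<forall>i<l. \<exists>p\<in>set (comps s). attrs A B i \<subseteq> fst p"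
      using absorbed unfolding absorbs_def by blast
    show "\<forall>p\<in>set (comps s). fst p \<noteq> {} \<and> fst p \<subseteq> (\<Union>i<l. attrs A B i)"
      using subjoins by (metis prod.collapse subjoin_nonempty subjoin_subset_attrs)
  qed
  with subjoins absorbed show ?thesis
    by auto
qed

theorem mainTheorem1:
  fixes l :: nat and A B light :: "nat \<Rightarrow> 'a" and J :: "nat \<Rightarrow> ('a, 'v) rel"
  assumes nonempty: "l \<ge> 1"
    and binary: "\<forall>i<l. A i \<noteq> B i"
    and light: "\<forall>i<l. light i \<in> {A i, B i}"
    and inst: "\<forall>i<l. \<forall>t\<in>J i. dom t = {A i, B i}"
    and conn: "query_connected l A B"
  shows "(\<nexists>f. f 0 = init_state \<and> (\<forall>n. jstep l A B light J (f n) (f (Suc n))))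
       \<and> (\<forall>s. (jstep l A B light J)\<^sup>*\<^sup>* init_state s \<and> (\<nexists>s'. jstep l A B light J s s')
            \<longrightarrow> (\<exists>c T. comps s = [(c, T)] \<and> T = query_answer l A B J))"
proof (intro conjI allI impI)
  show "\<nexists>f. f 0 = init_state \<and> (\<forall>n. jstep l A B light J (f n) (f (Suc n)))"
    using no_infinite_jstep_run by blast
next
  fix s
  assume "reachable l A B light J s \<and> terminal l A B light J s"
  moreover have "\<forall>i<l. \<forall>t\<in>J i. dom t = attrs A B i"
    using inst by (simp add: attrs_def)
  ultimately obtain p where "comps s = [p]" "subjoin l A B J p" "\<forall>i<l. absorbs A B J i p"
    using terminal_single_component[of l A B light J s] conn nonempty by blast
  then show "\<exists>c T. comps s = [(c, T)] \<and> T = query_answer l A B J"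
    using subjoin_absorbing_all_eq_query_answer[of l A B J "fst p" "snd p"] by (metis prod.collapse)
qed

end
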